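(* Let $(N_0,c,w,P)$ be an RS-situation and $(N_0,v)$ the corresponding RS-game. Then $x\in Core(N_0,v)$ if and only if there exists $w^*=(w_i^* )_{i\in N}\in\mathbb{R}^n$ with $w_i^*\ge c$ for all $i\in N$ and $\sum_{i\in S}\Pi_i^{ret}(q_i^c;w_i^* )\ge v(S)$ for all nonempty $S\subseteq N$, such that \[x_0=\sum_{i\in N}\Pi_i^{sup}(q_i^c;w_i^* )\quad\text{and}\quad x_i=\Pi_i^{ret}(q_i^c;w_i^* )\ \text{ for } i\in N.\]
   Context: Let $c\in\mathbb{R}$. An RS-problem is a triple $(c,w,p)$ where $w:\mathbb{R}_+\to(c,+\infty)$ is decreasing (non-increasing) and continuous, and $p:\mathbb{R}_+\to\mathbb{R}$ is decreasing (non-increasing) and continuous, satisfies $p(0)>w(0)$, and there exists $q>0$ with $p(q)=c$. An RS-situation is a tuple $(N_0,c,w,P)$ where $N=\{1,\dots,n\}$ is the set of retailers, $0$ denotes the supplier, $N_0=N\cup\{0\}$, $P=(p_1,\dots,p_n)$, and $(c,w,p_i)$ is an RS-problem for each $i\in N$. For $S\subseteq N$ write $S_0=S\cup\{0\}$. For $q\ge0$ and $\omega\in\mathbb{R}$, $\Pi_i^{ret}(q;\omega)=(p_i(q)-\omega)q$ and $\Pi_i^{sup}(q;\omega)=(\omega-c)q$. For nonempty $S\subseteq N$, $(q_i^S)_{i\in S}$ is a fixed optimal solution of: maximize $\sum_{i\in S}(p_i(q_i)-w(q_S))q_i$ over $q\in\mathbb{R}_+^{S}$ subject to $p_i(q_i)\ge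 w(q_S)$ for all $i\in S$, where $q_S=\sum_{i\in S}q_i$; $q_S^S=\sum_{i\in S}q_i^S$. For $i\in N$, $q_i^c$ is a fixed optimal solution of: maximize $(p_i(q)-c)q$ over $q\ge0$ subject to $p_i(q)\ge c$. The corresponding RS-game $(N_0,v)$ is the TU game on $N_0$ with $v(\emptyset)=0$ and, for all $S\subseteq N$, $v(S)=\sum_{i\in S}\Pi_i^{ret}(q_i^S;w(q_S^S))$ and $v(S_0)=\sum_{i\in S}\Pi_i^{ret}(q_i^c;c)$. The core is $Core(N_0,v)=\{x\in\mathbb{R}^{N_0}: \sum_{i\in N_0}x_i=v(N_0),\ \sum_{i\in T}x_i\ge v(T)\text{ for all }T\subset N_0\}$. *)

theory Defs
  imports Complex_Main
begin

definition decr_on_nonneg :: "(real \<Rightarrow> real) \<Rightarrow> bool" where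
  "decr_on_nonneg f \<longleftrightarrow> (\<forall>x y. 0 \<le> x \<longrightarrow> x \<le> y \<longrightarrow> f y \<le> f x)"

definition rs_problem :: "real \<Rightarrow> (real \<Rightarrow> real) \<Rightarrow> (real \<Rightarrow> real) \<Rightarrow> bool" where
  "rs_problem c w p \<longleftrightarrow>
     (\<forall>x\<ge>0. c < w x) \<and> decr_on_nonneg w \<and> continuous_on {0..} w \<and>
     decr_on_nonneg p \<and> continuous_on {0..} p \<and> w 0 < p 0 \<and>
     (\<exists>q>0. p q = c)"

text \<open>Retailers are 1..n, supplier is 0; p i is the price function of retailer i.\<close>
definition rs_situation :: "nat \<Rightarrow> real \<Rightarrow> (real \<Rightarrow> real) \<Rightarrow> (nat \<Rightarrow> real \<Rightarrow> real) \<Rightarrow> bool" where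
  "rs_situation n c w P \<longleftrightarrow> (\<forall>i\<in>{1..n}. rs_problem c w (P i))"

definition Pi_ret :: "(real \<Rightarrow> real) \<Rightarrow> real \<Rightarrow> real \<Rightarrow> real" where
  "Pi_ret p q \<omega> = (p q - \<omega>) * q"

definition Pi_sup :: "real \<Rightarrow> real \<Rightarrow> real \<Rightarrow> real" where
  "Pi_sup c q \<omega> = (\<omega> - c) * q"

definition coal_feasible :: "(real \<Rightarrow> real) \<Rightarrow> (nat \<Rightarrow> real \<Rightarrow> real) \<Rightarrow> nat set \<Rightarrow> (nat \<Rightarrow> real) \<Rightarrow> bool" where
  "coal_feasible w P S q \<longleftrightarrow>
     (\<forall>i\<in>S. 0 \<le> q i) \<and> (\<forall>i\<in>S. w (\<Sum>j\<in>S. q j) \<le> P i (q i))"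

definition coal_obj :: "(real \<Rightarrow> real) \<Rightarrow> (nat \<Rightarrow> real \<Rightarrow> real) \<Rightarrow> nat set \<Rightarrow> (nat \<Rightarrow> real) \<Rightarrow> real" where
  "coal_obj w P S q = (\<Sum>i\<in>S. (P i (q i) - w (\<Sum>j\<in>S. q j)) * q i)"

definition coal_optimal :: "(real \<Rightarrow> real) \<Rightarrow> (nat \<Rightarrow> real \<Rightarrow> real) \<Rightarrow> nat set \<Rightarrow> (nat \<Rightarrow> real) \<Rightarrow> bool" where
  "coal_optimal w P S q \<longleftrightarrow> coal_feasible w P S q \<and>
     (\<forall>q'. coal_feasible w P S q' \<longrightarrow> coal_obj w P S q' \<le> coal_obj w P S q)"

definition central_optimal :: "real \<Rightarrow> (real \<Rightarrow> real) \<Rightarrow> real \<Rightarrow> bool" where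
  "central_optimal c p q \<longleftrightarrow> 0 \<le> q \<and> c \<le> p q \<and>
     (\<forall>q'. 0 \<le> q' \<longrightarrow> c \<le> p q' \<longrightarrow> (p q' - c) * q' \<le> (p q - c) * q)"

text \<open>The RS-game on players {0..n}; qS S is the fixed optimal solution for coalition S,
  qc i the fixed optimal solution of the centralized problem of retailer i.\<close>
definition rs_game :: "real \<Rightarrow> (real \<Rightarrow> real) \<Rightarrow> (nat \<Rightarrow> real \<Rightarrow> real) \<Rightarrow>
    (nat set \<Rightarrow> nat \<Rightarrow> real) \<Rightarrow> (nat \<Rightarrow> real) \<Rightarrow> nat set \<Rightarrow> real" where
  "rs_game c w P qS qc T =
     (if T = {} then 0
      else if 0 \<in> T then (\<Sum>i\<in>T - {0}. Pi_ret (P i) (qc i) c)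
      else (\<Sum>i\<in>T. Pi_ret (P i) (qS T i) (w (\<Sum>j\<in>T. qS T j))))"

definition core :: "nat set \<Rightarrow> (nat set \<Rightarrow> real) \<Rightarrow> (nat \<Rightarrow> real) set" where
  "core N0 v = {x. (\<Sum>i\<in>N0. x i) = v N0 \<and> (\<forall>T. T \<subset> N0 \<longrightarrow> v T \<le> (\<Sum>i\<in>T. x i))}"

end

theory Submission
  imports Defs
begin

text \<open>
  A coalition containing the supplier earns the sum of its retailers' centralized profits
  a_i = Pi_ret(q_i^c; c), an additive quantity. Hence, given efficiency, the core constraint
  of the coalition N_0 - {i} says exactly x_i <= a_i, these constraints imply those of all
  other coalitions with the supplier, and the supplier receives the sum of the a_i - x_i.
  As p_i > c near 0, every q_i^c is positive, so each x_i <= a_i is the retailer profit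
  Pi_ret(q_i^c; w_i) at a unique wholesale price w_i >= c, and a_i - x_i is then the
  supplier profit Pi_sup(q_i^c; w_i).
\<close>

lemma Pi_sup_eq_Pi_ret_diff: "Pi_sup c q \<omega> = Pi_ret p q c - Pi_ret p q \<omega>"
  by (simp add: Pi_ret_def Pi_sup_def algebra_simps)

lemma Pi_ret_le_iff:
  assumes "0 < q"
  shows "Pi_ret p q \<omega> \<le> Pi_ret p q c \<longleftrightarrow> c \<le> \<omega>"
  using assms by (simp add: Pi_ret_def)

lemma Pi_ret_price_from_profit:
  assumes "q \<noteq> 0"
  shows "Pi_ret p q (p q - y / q) = y"
  using assms by (simp add: Pi_ret_def)

lemma ex_prices_iff_profits_le:
  assumes "\<And>i. i \<in> N \<Longrightarrow> 0 < q i"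
  shows "(\<exists>\<omega>. (\<forall>i\<in>N. c \<le> \<omega> i) \<and> (\<forall>i\<in>N. y i = Pi_ret (p i) (q i) (\<omega> i))) \<longleftrightarrow>
    (\<forall>i\<in>N. y i \<le> Pi_ret (p i) (q i) c)"
proof
  assume "\<exists>\<omega>. (\<forall>i\<in>N. c \<le> \<omega> i) \<and> (\<forall>i\<in>N. y i = Pi_ret (p i) (q i) (\<omega> i))"
  then show "\<forall>i\<in>N. y i \<le> Pi_ret (p i) (q i) c"
    using assms Pi_ret_le_iff by metis
next
  assume le: "\<forall>i\<in>N. y i \<le> Pi_ret (p i) (q i) c"
  define \<omega> where "\<omega> i = p i (q i) - y i / q i" for i
  have "y i = Pi_ret (p i) (q i) (\<omega> i)" if "i \<in> N" for i
    using assms[OF that] by (simp add: \<omega>_def Pi_ret_price_from_profit)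
  with le assms show "\<exists>\<omega>. (\<forall>i\<in>N. c \<le> \<omega> i) \<and> (\<forall>i\<in>N. y i = Pi_ret (p i) (q i) (\<omega> i))"
    by (metis Pi_ret_le_iff)
qed

lemma ex_wholesale_prices_iff:
  assumes "\<And>i. i \<in> N \<Longrightarrow> 0 < q i"
  shows "(\<exists>\<omega>. (\<forall>i\<in>N. c \<le> \<omega> i) \<and>
      (\<forall>S. S \<subseteq> N \<longrightarrow> S \<noteq> {} \<longrightarrow> v S \<le> (\<Sum>i\<in>S. Pi_ret (p i) (q i) (\<omega> i))) \<and>
      y0 = (\<Sum>i\<in>N. Pi_sup c (q i) (\<omega> i)) \<and> (\<forall>i\<in>N. y i = Pi_ret (p i) (q i) (\<omega> i)))
    \<longleftrightarrow> (\<forall>i\<in>N. y i \<le> Pi_ret (p i) (q i) c) \<and> y0 = (\<Sum>i\<in>N. Pi_ret (p i) (q i) c - y i) \<and>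
      (\<forall>S. S \<subseteq> N \<longrightarrow> S \<noteq> {} \<longrightarrow> v S \<le> sum y S)"
    (is "(\<exists>\<omega>. ?prices \<omega>) \<longleftrightarrow> ?profits")
proof -
  let ?priced = "\<lambda>\<omega>. \<forall>i\<in>N. y i = Pi_ret (p i) (q i) (\<omega> i)"
  let ?stable = "\<forall>S. S \<subseteq> N \<longrightarrow> S \<noteq> {} \<longrightarrow> v S \<le> sum y S"
  let ?supplier = "y0 = (\<Sum>i\<in>N. Pi_ret (p i) (q i) c - y i)"
  have "(\<exists>\<omega>. ?prices \<omega>) \<longleftrightarrow> (\<exists>\<omega>. ((\<forall>i\<in>N. c \<le> \<omega> i) \<and> ?priced \<omega>) \<and> ?supplier \<and> ?stable)"
  proof (intro ex_cong1, goal_cases)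
    case (1 \<omega>)
    show ?case
    proof (cases "?priced \<omega>")
      case True
      then have "(\<Sum>i\<in>S. Pi_ret (p i) (q i) (\<omega> i)) = sum y S" if "S \<subseteq> N" for S
        using that by (intro sum.cong) auto
      then have stable_iff: "(\<forall>S. S \<subseteq> N \<longrightarrow> S \<noteq> {} \<longrightarrow>
          v S \<le> (\<Sum>i\<in>S. Pi_ret (p i) (q i) (\<omega> i))) \<longleftrightarrow> ?stable"
        by auto
      have supplier_eq: "(\<Sum>i\<in>N. Pi_sup c (q i) (\<omega> i)) = (\<Sum>i\<in>N. Pi_ret (p i) (q i) c - y i)"
        using True by (intro sum.cong) (auto simp: Pi_sup_eq_Pi_ret_diff)
      show ?thesis
        by (simp only: stable_iff supplier_eq) blast
    qed blast
  qed
  also have "\<dots> \<longleftrightarrow> ?profits"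
    using ex_prices_iff_profits_le[of N q c y p] assms by blast
  finally show ?thesis .
qed

lemma central_optimal_pos:
  fixes p :: "real \<Rightarrow> real"
  assumes cont: "continuous_on {0..} p" and "c < p 0" and opt: "central_optimal c p q"
  shows "0 < q"
proof -
  have "(p \<longlongrightarrow> p 0) (at_right 0)"
    using cont by (auto simp: continuous_on_def intro: tendsto_within_subset)
  then have "\<forall>\<^sub>F t in at_right 0. c < p t"
    using \<open>c < p 0\<close> by (rule order_tendstoD)
  then obtain t where t: "0 < t" "c < p t"
    by (auto simp: eventually_at_right_field) (meson dense)
  then have "0 < (p t - c) * t"
    by simp
  also have "\<dots> \<le> (p q - c) * q"
    using opt t unfolding central_optimal_def by (meson less_imp_le)
  finally show "0 < q"
    using opt by (cases "q = 0") (auto simp: central_optimal_def)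
qed

lemma core_insert_supplier_iff:
  fixes N :: "nat set" and v :: "nat set \<Rightarrow> real" and a x :: "nat \<Rightarrow> real"
  assumes "finite N" and "s \<notin> N" and "v {} = 0"
    and v_supplier: "\<And>S. S \<subseteq> N \<Longrightarrow> v (insert s S) = (\<Sum>i\<in>S. a i)"
  shows "x \<in> core (insert s N) v \<longleftrightarrow>
    (\<forall>i\<in>N. x i \<le> a i) \<and> x s = (\<Sum>i\<in>N. a i - x i) \<and>
    (\<forall>S. S \<subseteq> N \<longrightarrow> S \<noteq> {} \<longrightarrow> v S \<le> (\<Sum>i\<in>S. x i))"
proof
  assume "x \<in> core (insert s N) v"
  then have total: "x s + sum x N = sum a N"
    and stable: "\<And>T. T \<subset> insert s N \<Longrightarrow> v T \<le> sum x T"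
    using assms by (auto simp: core_def)
  have "x i \<le> a i" if "i \<in> N" for i
  proof -
    have "i \<notin> insert s (N - {i})"
      using that assms by auto
    then have "insert s (N - {i}) \<subset> insert s N"
      using that by blast
    then have "v (insert s (N - {i})) \<le> sum x (insert s (N - {i}))"
      by (rule stable)
    then have "sum a (N - {i}) \<le> x s + sum x (N - {i})"
      using v_supplier[of "N - {i}"] assms by simp
    then show ?thesis
      using total that assms by (simp add: sum_diff1)
  qed
  moreover have "x s = (\<Sum>i\<in>N. a i - x i)"
    using total by (simp add: sum_subtractf)
  moreover have "v S \<le> sum x S" if "S \<subseteq> N" for S
  proof (rule stable)
    show "S \<subset> insert s N"
      using that assms by auto
  qed
  ultimately show "(\<forall>i\<in>N. x i \<le> a i) \<and> x s = (\<Sum>i\<in>N. a i - x i) \<and>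
    (\<forall>S. S \<subseteq> N \<longrightarrow> S \<noteq> {} \<longrightarrow> v S \<le> (\<Sum>i\<in>S. x i))"
    by blast
next
  assume "(\<forall>i\<in>N. x i \<le> a i) \<and> x s = (\<Sum>i\<in>N. a i - x i) \<and>
    (\<forall>S. S \<subseteq> N \<longrightarrow> S \<noteq> {} \<longrightarrow> v S \<le> (\<Sum>i\<in>S. x i))"
  then have le: "\<forall>i\<in>N. x i \<le> a i" and supplier: "x s = (\<Sum>i\<in>N. a i - x i)"
    and retailers: "\<And>S. S \<subseteq> N \<Longrightarrow> S \<noteq> {} \<Longrightarrow> v S \<le> sum x S"
    by auto
  have with_supplier: "x s + sum x S = sum a S + (\<Sum>i\<in>N - S. a i - x i)" if "S \<subseteq> N" for S
    using supplier sum.subset_diff[OF that \<open>finite N\<close>, of "\<lambda>i. a i - x i"]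
    by (simp add: sum_subtractf)
  have total: "sum x (insert s N) = v (insert s N)"
    using with_supplier[of N] v_supplier[of N] assms by simp
  have "v T \<le> sum x T" if "T \<subset> insert s N" for T
  proof (cases "s \<in> T")
    case True
    then have S: "T - {s} \<subseteq> N" and T: "T = insert s (T - {s})"
      using that by auto
    have "finite T"
      using that \<open>finite N\<close> finite_subset by auto
    then have "sum x T = x s + sum x (T - {s})"
      using True by (simp add: sum.remove)
    moreover have "0 \<le> (\<Sum>i\<in>N - (T - {s}). a i - x i)"
      using le by (intro sum_nonneg) auto
    moreover have "v T = sum a (T - {s})"
      using v_supplier[OF S] T by simp
    ultimately show ?thesis
      using with_supplier[OF S] by linarith
  next
    case False
    then show ?thesis
      using that retailers[of T] \<open>v {} = 0\<close> by (cases "T = {}") auto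
  qed
  with total show "x \<in> core (insert s N) v"
    by (simp add: core_def)
qed

lemma rs_game_empty: "rs_game c w P qS qc {} = 0"
  by (simp add: rs_game_def)

lemma rs_game_insert_supplier:
  assumes "0 \<notin> S"
  shows "rs_game c w P qS qc (insert 0 S) = (\<Sum>i\<in>S. Pi_ret (P i) (qc i) c)"
  using assms by (simp add: rs_game_def)

theorem theorem5p6:
  fixes n :: nat and c :: real and w :: "real \<Rightarrow> real" and P :: "nat \<Rightarrow> real \<Rightarrow> real"
    and qS :: "nat set \<Rightarrow> nat \<Rightarrow> real" and qc :: "nat \<Rightarrow> real" and x :: "nat \<Rightarrow> real"
  assumes sit: "rs_situation n c w P"
    and qS_opt: "\<And>S. S \<subseteq> {1..n} \<Longrightarrow> S \<noteq> {} \<Longrightarrow> coal_optimal w P S (qS S)"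
    and qc_opt: "\<And>i. i \<in> {1..n} \<Longrightarrow> central_optimal c (P i) (qc i)"
  shows "x \<in> core {0..n} (rs_game c w P qS qc) \<longleftrightarrow>
    (\<exists>wst :: nat \<Rightarrow> real.
        (\<forall>i\<in>{1..n}. c \<le> wst i) \<and>
        (\<forall>S. S \<subseteq> {1..n} \<longrightarrow> S \<noteq> {} \<longrightarrow>
              rs_game c w P qS qc S \<le> (\<Sum>i\<in>S. Pi_ret (P i) (qc i) (wst i))) \<and>
        x 0 = (\<Sum>i\<in>{1..n}. Pi_sup c (qc i) (wst i)) \<and>
        (\<forall>i\<in>{1..n}. x i = Pi_ret (P i) (qc i) (wst i)))"
proof -
  have qc_pos: "0 < qc i" if "i \<in> {1..n}" for i
  proof (rule central_optimal_pos)
    have "rs_problem c w (P i)"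
      using sit that by (simp add: rs_situation_def)
    then show "continuous_on {0..} (P i)" and "c < P i 0"
      by (auto simp: rs_problem_def intro: less_trans)
    show "central_optimal c (P i) (qc i)"
      using qc_opt that .
  qed
  have retailers_and_supplier: "{0..n} = insert 0 {1..n}"
    by auto
  have "x \<in> core {0..n} (rs_game c w P qS qc) \<longleftrightarrow>
      (\<forall>i\<in>{1..n}. x i \<le> Pi_ret (P i) (qc i) c) \<and>
      x 0 = (\<Sum>i\<in>{1..n}. Pi_ret (P i) (qc i) c - x i) \<and>
      (\<forall>S. S \<subseteq> {1..n} \<longrightarrow> S \<noteq> {} \<longrightarrow> rs_game c w P qS qc S \<le> sum x S)"
    unfolding retailers_and_supplier
    by (rule core_insert_supplier_iff) (auto simp: rs_game_empty intro!: rs_game_insert_supplier)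
  also have "\<dots> \<longleftrightarrow> (\<exists>wst. (\<forall>i\<in>{1..n}. c \<le> wst i) \<and>
        (\<forall>S. S \<subseteq> {1..n} \<longrightarrow> S \<noteq> {} \<longrightarrow>
              rs_game c w P qS qc S \<le> (\<Sum>i\<in>S. Pi_ret (P i) (qc i) (wst i))) \<and>
        x 0 = (\<Sum>i\<in>{1..n}. Pi_sup c (qc i) (wst i)) \<and>
        (\<forall>i\<in>{1..n}. x i = Pi_ret (P i) (qc i) (wst i)))"
    by (rule ex_wholesale_prices_iff[symmetric]) (rule qc_pos)
  finally show ?thesis .
qed

end
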